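(* Let $N\ge3$, $h=1/N$, $\rho_j=jh$, $I_j=[\rho_{j-1},\rho_j]$ ($j=1,\dots,N$, with $\rho_0\equiv\rho_N$ on $\mathbb{T}=\mathbb{R}/\mathbb{Z}$), and let $\mathbb{K}^h$ be the space of continuous periodic functions on $\mathbb{T}$ that are linear on each $I_j$. Let $\tau>0$ be arbitrary. Let $(\boldsymbol{X}^m,V^m,\kappa^m)\in[\mathbb{K}^h]^2\times\mathbb{K}^h\times\mathbb{K}^h$, $m\ge0$, be a sequence (with all segment lengths $|\boldsymbol{h}^m_j|>0$) such that for every $m\ge0$, $$\Big(\boldsymbol{n}^m\cdot\tfrac{\boldsymbol{X}^{m+1}-\boldsymbol{X}^m}{\tau},\phi^h\Big)_{\Gamma^m}=\big(V^{m+1},\phi^h\big)_{\Gamma^m}\quad\forall\phi^h\in\mathbb{K}^h,$$ $$\big(V^{m+1}\boldsymbol{n}^m,\boldsymbol{\omega}^h\big)_{\Gamma^m}=\Big(-\partial_s\kappa^{m+1}\,\boldsymbol{n}^m+\tfrac12(\kappa^{m+1})^2\partial_s\boldsymbol{X}^{m+1},\,\partial_s\boldsymbol{\omega}^h\Big)_{\Gamma^m}\quad\forall\boldsymbol{\omega}^h\in[\mathbb{K}^h]^2,$$ $$\Big(\tfrac{\kappa^{m+1}-\kappa^m}{\tau},\psi^h\Big)_{\Gamma^m}=\Big(\boldsymbol{n}^m\cdot\partial_s\big(\tfrac{\boldsymbol{X}^{m+1}-\boldsymbol{X}^m}{\tau}\big),\partial_s\psi^h\Big)_{\Gamma^m}-\Big(\big(\partial_s\boldsymbol{X}^{m+1}\cdot\partial_s\big(\tfrac{\boldsymbol{X}^{m+1}-\boldsymbol{X}^m}{\tau}\big)\big)\kappa^{m+1},\psi^h\Big)_{\Gamma^m}\quad\forall\psi^h\in\mathbb{K}^h.$$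 Define $W^m:=\tfrac14\sum_{j=1}^N|\boldsymbol{h}^m_j|\big[(\kappa^m(\rho_{j-1}))^2+(\kappa^m(\rho_j))^2\big]$. Then, without any restriction on $\tau$, $W^{m+1}\le W^m\le W^0$ for all $m\ge0$.
   Context: For $\boldsymbol{X}^m\in[\mathbb{K}^h]^2$, the polygon $\Gamma^m=\boldsymbol{X}^m(\mathbb{T})$ has edges $\boldsymbol{h}^m_j=\boldsymbol{X}^m(\rho_j)-\boldsymbol{X}^m(\rho_{j-1})$. In all expressions with subscript $\Gamma^m$ the discrete arc-length derivative is taken with respect to $\Gamma^m$: for $u\in\mathbb{K}^h$ (or $[\mathbb{K}^h]^2$), $\partial_s u|_{I_j}=\frac{u(\rho_j)-u(\rho_{j-1})}{|\boldsymbol{h}^m_j|}$; in particular $\partial_s\boldsymbol{X}^{m+1}|_{I_j}=\boldsymbol{h}^{m+1}_j/|\boldsymbol{h}^m_j|$. The normal is $\boldsymbol{n}^m|_{I_j}=-(\boldsymbol{h}^m_j)^\perp/|\boldsymbol{h}^m_j|$ with $(u_1,u_2)^\perp=(-u_2,u_1)$. Mass-lumped inner product: $(u,v)_{\Gamma^m}=\frac12\sum_{j=1}^N|\boldsymbol{h}^m_j|\big[(u\cdot v)(\rho_{j-1}^+)+(u\cdot v)(\rho_j^-)\big]$, one-sided limits taken within $I_j$. *)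

theory Defs
  imports "HOL-Analysis.Analysis"
begin

definition rho :: "nat \<Rightarrow> nat \<Rightarrow> real" where
  "rho N j = real j / real N"

text \<open>K^h: continuous 1-periodic functions (functions on the torus R/Z lifted to R)
  which are affine on each I_j = [rho_{j-1}, rho_j]. Continuity is automatic, as the
  affine pieces agree at the shared nodes.\<close>
definition Kh :: "nat \<Rightarrow> (real \<Rightarrow> real) set" where
  "Kh N = {f. (\<forall>x. f (x + 1) = f x) \<and>
     (\<forall>j\<in>{1..N}. \<exists>a b. \<forall>x\<in>{rho N (j - 1)..rho N j}. f x = a * x + b)}"

definition Kh2 :: "nat \<Rightarrow> (real \<Rightarrow> real^2) set" where
  "Kh2 N = {f. (\<lambda>x. f x $ 1) \<in> Kh N \<and> (\<lambda>x. f x $ 2) \<in> Kh N}"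

definition perp :: "real^2 \<Rightarrow> real^2" where
  "perp u = vector [- (u $ 2), u $ 1]"

definition hvec :: "nat \<Rightarrow> (real \<Rightarrow> real^2) \<Rightarrow> nat \<Rightarrow> real^2" where
  "hvec N X j = X (rho N j) - X (rho N (j - 1))"

definition len :: "nat \<Rightarrow> (real \<Rightarrow> real^2) \<Rightarrow> nat \<Rightarrow> real" where
  "len N X j = norm (hvec N X j)"

definition nrm :: "nat \<Rightarrow> (real \<Rightarrow> real^2) \<Rightarrow> nat \<Rightarrow> real^2" where
  "nrm N X j = - ((1 / len N X j) *\<^sub>R perp (hvec N X j))"

definition dsS :: "nat \<Rightarrow> (real \<Rightarrow> real^2) \<Rightarrow> (real \<Rightarrow> real) \<Rightarrow> nat \<Rightarrow> real" where
  "dsS N X u j = (u (rho N j) - u (rho N (j - 1))) / len N X j"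

definition dsV :: "nat \<Rightarrow> (real \<Rightarrow> real^2) \<Rightarrow> (real \<Rightarrow> real^2) \<Rightarrow> nat \<Rightarrow> real^2" where
  "dsV N X u j = (1 / len N X j) *\<^sub>R (u (rho N j) - u (rho N (j - 1)))"

text \<open>The integrand is given piecewise:
  F j x is its expression on I_j (evaluated at x), so F j (rho_{j-1}) and F j (rho_j)
  are the one-sided limits within I_j.\<close>
definition lump :: "nat \<Rightarrow> (real \<Rightarrow> real^2) \<Rightarrow> (nat \<Rightarrow> real \<Rightarrow> real) \<Rightarrow> real" where
  "lump N X F = (1 / 2) * (\<Sum>j = 1..N. len N X j * (F j (rho N (j - 1)) + F j (rho N j)))"

definition Wen :: "nat \<Rightarrow> (real \<Rightarrow> real^2) \<Rightarrow> (real \<Rightarrow> real) \<Rightarrow> real" where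
  "Wen N X k = (1 / 4) * (\<Sum>j = 1..N. len N X j * ((k (rho N (j - 1)))\<^sup>2 + (k (rho N j))\<^sup>2))"

end

theory Submission
  imports Defs
begin

text \<open>Test the equations of step m with \<phi> = V^{m+1}, \<omega> = (X^{m+1} - X^m)/\<tau> and
  \<psi> = \<kappa>^{m+1}, and eliminate the term (n^m \<bullet> \<partial>_s \<omega>, \<partial>_s \<kappa>^{m+1}) they share. On \<Gamma>^m this gives
    ((\<kappa>^{m+1} - \<kappa>^m) \<kappa>^{m+1}, 1) + \<tau>/2 (A (\<kappa>^{m+1})^2, 1) = -\<tau> (V^{m+1}, V^{m+1}) <= 0,
  where A = \<partial>_s X^{m+1} \<bullet> \<partial>_s \<omega>. The left side dominates the change of 2 W: the first term
  because (\<kappa>^{m+1})^2 - (\<kappa>^m)^2 <= 2 (\<kappa>^{m+1} - \<kappa>^m) \<kappa>^{m+1}, the second because a new edge a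
  and the old edge b satisfy |a| |b| - |b|^2 <= a \<bullet> (a - b), i.e. |a| <= |b| (1 + \<tau> A).
  Neither estimate involves the size of \<tau>.\<close>

lemma Kh_lincomb:
  assumes "p \<in> Kh N" "q \<in> Kh N"
  shows "(\<lambda>x. a * p x + b * q x) \<in> Kh N"
  unfolding Kh_def
proof (safe)
  fix x
  show "a * p (x + 1) + b * q (x + 1) = a * p x + b * q x"
    using assms unfolding Kh_def by simp
next
  fix j assume j: "j \<in> {1..N}"
  obtain ap bp where p: "\<forall>x\<in>{rho N (j - 1)..rho N j}. p x = ap * x + bp"
    using assms(1) j unfolding Kh_def by blast
  obtain aq bq where q: "\<forall>x\<in>{rho N (j - 1)..rho N j}. q x = aq * x + bq"
    using assms(2) j unfolding Kh_def by blast
  show "\<exists>c d. \<forall>x\<in>{rho N (j - 1)..rho N j}. a * p x + b * q x = c * x + d"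
    using p q by (intro exI[of _ "a * ap + b * aq"] exI[of _ "a * bp + b * bq"]) (simp add: algebra_simps)
qed

lemma Kh2_scaleR_diff:
  assumes "f \<in> Kh2 N" "g \<in> Kh2 N"
  shows "(\<lambda>x. c *\<^sub>R (f x - g x)) \<in> Kh2 N"
  using Kh_lincomb[of "\<lambda>x. f x $ i" N "\<lambda>x. g x $ i" c "- c" for i] assms
  unfolding Kh2_def by (simp add: algebra_simps)

lemma lump_add: "lump N X (\<lambda>j x. F j x + G j x) = lump N X F + lump N X G"
  unfolding lump_def by (simp add: sum.distrib algebra_simps)

lemma lump_cmult: "lump N X (\<lambda>j x. c * F j x) = c * lump N X F"
  unfolding lump_def by (simp add: sum_distrib_left algebra_simps)

lemma lump_mono:
  assumes "\<And>j x. j \<in> {1..N} \<Longrightarrow> F j x \<le> G j x"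
  shows "lump N X F \<le> lump N X G"
  unfolding lump_def
  by (auto intro!: mult_left_mono sum_mono add_mono assms simp: len_def)

lemma lump_nonneg:
  assumes "\<And>j x. j \<in> {1..N} \<Longrightarrow> 0 \<le> F j x"
  shows "0 \<le> lump N X F"
  using lump_mono[of N "\<lambda>j x. 0" F X] assms by (simp add: lump_def)

lemma Wen_eq_lump: "Wen N X k = lump N X (\<lambda>j x. (k x)\<^sup>2) / 2"
  unfolding Wen_def lump_def by simp

lemma norm_le_norm_add_inner:
  fixes a b :: "'a::real_inner"
  assumes "norm b > 0"
  shows "norm a \<le> norm b + a \<bullet> (a - b) / norm b"
proof -
  have "norm b * (norm a - norm b) \<le> (norm a)\<^sup>2 - norm a * norm b"
    using zero_le_power2[of "norm a - norm b"] by (simp add: power2_eq_square algebra_simps)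
  also have "\<dots> \<le> a \<bullet> (a - b)"
    using norm_cauchy_schwarz[of a b] by (simp add: inner_diff_right power2_norm_eq_inner)
  finally have "norm b * (norm a - norm b) \<le> a \<bullet> (a - b)" .
  then show ?thesis using assms by (simp add: field_simps)
qed

lemma len_le_first_variation:
  assumes "len N X j > 0"
  shows "len N Y j \<le> len N X j * (1 + dsV N X Y j \<bullet> dsV N X (\<lambda>y. Y y - X y) j)"
proof -
  define a where "a = hvec N Y j"
  define b where "b = hvec N X j"
  have dsY: "dsV N X Y j = (1 / norm b) *\<^sub>R a"
    and dsD: "dsV N X (\<lambda>y. Y y - X y) j = (1 / norm b) *\<^sub>R (a - b)"
    unfolding dsV_def a_def b_def hvec_def len_def by (simp_all add: algebra_simps)
  have "dsV N X Y j \<bullet> dsV N X (\<lambda>y. Y y - X y) j = a \<bullet> (a - b) / (norm b * norm b)"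
    unfolding dsY dsD by simp
  then have "len N X j * (1 + dsV N X Y j \<bullet> dsV N X (\<lambda>y. Y y - X y) j) = norm b + a \<bullet> (a - b) / norm b"
    using assms unfolding len_def b_def[symmetric] by (simp add: field_simps)
  then show ?thesis
    using norm_le_norm_add_inner[of b a] assms unfolding len_def a_def[symmetric] b_def[symmetric] by simp
qed

lemma Wen_le_first_variation:
  assumes "\<And>j. j \<in> {1..N} \<Longrightarrow> len N X j > 0"
  shows "2 * Wen N Y k \<le> lump N X (\<lambda>j x. (1 + dsV N X Y j \<bullet> dsV N X (\<lambda>y. Y y - X y) j) * (k x)\<^sup>2)"
proof -
  let ?g = "\<lambda>j. dsV N X Y j \<bullet> dsV N X (\<lambda>y. Y y - X y) j"
  have "len N Y j * ((k (rho N (j - 1)))\<^sup>2 + (k (rho N j))\<^sup>2)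
    \<le> len N X j * ((1 + ?g j) * (k (rho N (j - 1)))\<^sup>2 + (1 + ?g j) * (k (rho N j))\<^sup>2)"
    if "j \<in> {1..N}" for j
    using mult_right_mono[OF len_le_first_variation[OF assms[OF that]],
        of "(k (rho N (j - 1)))\<^sup>2 + (k (rho N j))\<^sup>2" Y]
    by (simp add: algebra_simps)
  then have "(\<Sum>j = 1..N. len N Y j * ((k (rho N (j - 1)))\<^sup>2 + (k (rho N j))\<^sup>2))
    \<le> (\<Sum>j = 1..N. len N X j * ((1 + ?g j) * (k (rho N (j - 1)))\<^sup>2 + (1 + ?g j) * (k (rho N j))\<^sup>2))"
    by (rule sum_mono)
  then show ?thesis
    unfolding Wen_def lump_def by simp
qed

lemma dsV_scaleR: "dsV N X (\<lambda>y. c *\<^sub>R u y) j = c *\<^sub>R dsV N X u j"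
  unfolding dsV_def by (simp add: algebra_simps)

lemma Wen_step_le:
  fixes X0 X1 :: "real \<Rightarrow> real^2" and v k0 k1 :: "real \<Rightarrow> real"
  assumes tau: "\<tau> > 0"
    and lenpos: "\<And>j. j \<in> {1..N} \<Longrightarrow> len N X0 j > 0"
    and X0: "X0 \<in> Kh2 N" and X1: "X1 \<in> Kh2 N" and v: "v \<in> Kh N" and k1: "k1 \<in> Kh N"
    and eq1: "\<And>\<phi>. \<phi> \<in> Kh N \<Longrightarrow>
       lump N X0 (\<lambda>j x. (nrm N X0 j \<bullet> ((1 / \<tau>) *\<^sub>R (X1 x - X0 x))) * \<phi> x)
     = lump N X0 (\<lambda>j x. v x * \<phi> x)"
    and eq2: "\<And>\<omega>. \<omega> \<in> Kh2 N \<Longrightarrow>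
       lump N X0 (\<lambda>j x. (v x *\<^sub>R nrm N X0 j) \<bullet> \<omega> x)
     = lump N X0 (\<lambda>j x. ((- dsS N X0 k1 j) *\<^sub>R nrm N X0 j
            + ((1 / 2) * (k1 x)\<^sup>2) *\<^sub>R dsV N X0 X1 j) \<bullet> dsV N X0 \<omega> j)"
    and eq3: "\<And>\<psi>. \<psi> \<in> Kh N \<Longrightarrow>
       lump N X0 (\<lambda>j x. ((k1 x - k0 x) / \<tau>) * \<psi> x)
     = lump N X0 (\<lambda>j x. (nrm N X0 j \<bullet>
            dsV N X0 (\<lambda>y. (1 / \<tau>) *\<^sub>R (X1 y - X0 y)) j) * dsS N X0 \<psi> j)
     - lump N X0 (\<lambda>j x. ((dsV N X0 X1 j \<bullet>
            dsV N X0 (\<lambda>y. (1 / \<tau>) *\<^sub>R (X1 y - X0 y)) j) * k1 x) * \<psi> x)"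
  shows "Wen N X1 k1 \<le> Wen N X0 k0"
proof -
  define \<delta> where "\<delta> = (\<lambda>y. (1 / \<tau>) *\<^sub>R (X1 y - X0 y))"
  define c where "c j = nrm N X0 j \<bullet> dsV N X0 \<delta> j" for j
  define A where "A j = dsV N X0 X1 j \<bullet> dsV N X0 \<delta> j" for j
  define cross where "cross = lump N X0 (\<lambda>j x. c j * dsS N X0 k1 j)"
  define stretch where "stretch = lump N X0 (\<lambda>j x. A j * (k1 x)\<^sup>2)"
  have \<delta>K: "\<delta> \<in> Kh2 N"
    unfolding \<delta>_def using X1 X0 by (rule Kh2_scaleR_diff)
  have "lump N X0 (\<lambda>j x. v x * v x) = lump N X0 (\<lambda>j x. (v x *\<^sub>R nrm N X0 j) \<bullet> \<delta> x)"
    using eq1[OF v] unfolding \<delta>_def by (simp add: mult.commute)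
  also have "\<dots> = lump N X0 (\<lambda>j x. - 1 * (c j * dsS N X0 k1 j) + 1 / 2 * (A j * (k1 x)\<^sup>2))"
    unfolding eq2[OF \<delta>K] c_def A_def by (simp add: inner_add_left algebra_simps)
  finally have tested_velocity: "lump N X0 (\<lambda>j x. v x * v x) = - cross + stretch / 2"
    unfolding cross_def stretch_def lump_add lump_cmult by simp
  have "(\<lambda>j x. ((k1 x - k0 x) / \<tau>) * k1 x) = (\<lambda>j x. 1 / \<tau> * ((k1 x - k0 x) * k1 x))"
    by (simp add: fun_eq_iff)
  then have "lump N X0 (\<lambda>j x. 1 / \<tau> * ((k1 x - k0 x) * k1 x)) = cross - stretch"
    using eq3[OF k1, folded \<delta>_def] unfolding cross_def stretch_def c_def[symmetric] A_def[symmetric]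
    by (simp add: power2_eq_square mult.assoc)
  then have tested_curvature: "lump N X0 (\<lambda>j x. (k1 x - k0 x) * k1 x) = \<tau> * (cross - stretch)"
    using tau unfolding lump_cmult by (simp add: field_simps)
  have "dsV N X0 X1 j \<bullet> dsV N X0 (\<lambda>y. X1 y - X0 y) j = \<tau> * A j" for j
    using tau unfolding A_def \<delta>_def dsV_scaleR by simp
  then have "2 * Wen N X1 k1 \<le> lump N X0 (\<lambda>j x. (k1 x)\<^sup>2 + \<tau> * (A j * (k1 x)\<^sup>2))"
    using Wen_le_first_variation[OF lenpos, of X1 k1] by (simp add: algebra_simps)
  also have "\<dots> \<le> lump N X0 (\<lambda>j x. ((k0 x)\<^sup>2 + 2 * ((k1 x - k0 x) * k1 x)) + \<tau> * (A j * (k1 x)\<^sup>2))"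
    using sum_squares_bound[of "k0 _" "k1 _"] by (intro lump_mono) (simp add: power2_eq_square algebra_simps)
  also have "\<dots> = 2 * Wen N X0 k0 + 2 * \<tau> * (cross - stretch) + \<tau> * stretch"
    unfolding lump_add lump_cmult Wen_eq_lump tested_curvature stretch_def by simp
  also have "\<dots> = 2 * Wen N X0 k0 - 2 * \<tau> * lump N X0 (\<lambda>j x. v x * v x)"
    unfolding tested_velocity by (simp add: algebra_simps)
  also have "\<dots> \<le> 2 * Wen N X0 k0"
    using tau by (simp add: lump_nonneg)
  finally show ?thesis by simp
qed

theorem theorem4p1:
  fixes N :: nat and \<tau> :: real
    and X :: "nat \<Rightarrow> real \<Rightarrow> real^2" and V \<kappa> :: "nat \<Rightarrow> real \<Rightarrow> real"
  assumes N3: "N \<ge> 3"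
    and tau: "\<tau> > 0"
    and XK: "\<And>m. X m \<in> Kh2 N"
    and VK: "\<And>m. V m \<in> Kh N"
    and kK: "\<And>m. \<kappa> m \<in> Kh N"
    and lenpos: "\<And>m j. j \<in> {1..N} \<Longrightarrow> len N (X m) j > 0"
    and eq1: "\<And>m \<phi>. \<phi> \<in> Kh N \<Longrightarrow>
       lump N (X m) (\<lambda>j x. (nrm N (X m) j \<bullet> ((1 / \<tau>) *\<^sub>R (X (Suc m) x - X m x))) * \<phi> x)
     = lump N (X m) (\<lambda>j x. V (Suc m) x * \<phi> x)"
    and eq2: "\<And>m \<omega>. \<omega> \<in> Kh2 N \<Longrightarrow>
       lump N (X m) (\<lambda>j x. (V (Suc m) x *\<^sub>R nrm N (X m) j) \<bullet> \<omega> x)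
     = lump N (X m) (\<lambda>j x. ((- dsS N (X m) (\<kappa> (Suc m)) j) *\<^sub>R nrm N (X m) j
            + ((1 / 2) * (\<kappa> (Suc m) x)\<^sup>2) *\<^sub>R dsV N (X m) (X (Suc m)) j) \<bullet> dsV N (X m) \<omega> j)"
    and eq3: "\<And>m \<psi>. \<psi> \<in> Kh N \<Longrightarrow>
       lump N (X m) (\<lambda>j x. ((\<kappa> (Suc m) x - \<kappa> m x) / \<tau>) * \<psi> x)
     = lump N (X m) (\<lambda>j x. (nrm N (X m) j \<bullet>
            dsV N (X m) (\<lambda>y. (1 / \<tau>) *\<^sub>R (X (Suc m) y - X m y)) j) * dsS N (X m) \<psi> j)
     - lump N (X m) (\<lambda>j x. ((dsV N (X m) (X (Suc m)) j \<bullet>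
            dsV N (X m) (\<lambda>y. (1 / \<tau>) *\<^sub>R (X (Suc m) y - X m y)) j) * \<kappa> (Suc m) x) * \<psi> x)"
  shows "\<forall>m. Wen N (X (Suc m)) (\<kappa> (Suc m)) \<le> Wen N (X m) (\<kappa> m)
            \<and> Wen N (X m) (\<kappa> m) \<le> Wen N (X 0) (\<kappa> 0)"
proof -
  have step: "Wen N (X (Suc m)) (\<kappa> (Suc m)) \<le> Wen N (X m) (\<kappa> m)" for m
    by (rule Wen_step_le[OF tau lenpos XK XK VK kK eq1 eq2 eq3])
  then have "decseq (\<lambda>m. Wen N (X m) (\<kappa> m))"
    by (rule decseq_SucI)
  then show ?thesis
    using step decseqD[OF _ le0] by blast
qed

end
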